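(* Let $G$ be a crossing closed graph on $[n]$, let $\unlhd$ be a total order on $E(G)$, and let $S$ be a noncrossing NBC set of $G$ (with respect to $\unlhd$). Viewing each edge of $S$ as the bond with that single edge, the join $\bigvee S$ computed in $L_G$ equals the join $\bigvee S$ computed in $NC_G$.
   Context: All graphs are finite simple graphs with vertex set $[n]=\{1,\dots,n\}$; edges are written $ij$ with $i<j$. Two edges $a_1a_2$ and $b_1b_2$ cross if $a_1<b_1<a_2<b_2$ or $b_1<a_1<b_2<a_2$. A spanning subgraph is identified with its edge set. A bond of $G$ is a spanning subgraph each of whose connected components is an induced subgraph of $G$; for a bond $H$, $\pi(H)$ is the partition of $[n]$ into vertex sets of its components. A set partition is crossing if there are distinct blocks $B,B'$ and $a,c\in B$, $b,d\in B'$ with $a<b<c<d$, noncrossing otherwise; $H$ is noncrossing if $\pi(H)$ is. $L_G$ is the lattice of all bonds ordered by inclusion of edge sets, $NC_G$ the subposet of noncrossing bonds. Two crossing edges $e,f$ are crossing closed if among all induced connected subgraphs of $G$ containing $e$ and $f$ there is a unique minimal one under containment; $G$ is crossing closed if every pair of crossing edges is (in which case $NC_G$ is a lattice). Given the total order $\unlhd$, a broken circuit is the edge set of a cycle of $G$ with its $\unlhd$-smallest edge removed; an NBC set is a set of edges containing no broken circuit; a noncrossing NBC set is an NBC set no two of whose edges cross. *)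

theory Defs
  imports Main
begin

type_synonym edge = "nat \<times> nat"

definition graph_on :: "nat \<Rightarrow> edge set \<Rightarrow> bool" where
  "graph_on n G \<longleftrightarrow> (\<forall>(i,j)\<in>G. 1 \<le> i \<and> i < j \<and> j \<le> n)"

definition mk_edge :: "nat \<Rightarrow> nat \<Rightarrow> edge" where
  "mk_edge u v = (min u v, max u v)"

definition adj :: "edge set \<Rightarrow> nat \<Rightarrow> nat \<Rightarrow> bool" where
  "adj H u v \<longleftrightarrow> (u, v) \<in> H \<or> (v, u) \<in> H"

definition component :: "nat \<Rightarrow> edge set \<Rightarrow> nat \<Rightarrow> nat set" where
  "component n H v = {u \<in> {1..n}. (adj H)\<^sup>*\<^sup>* v u}"

definition comp_partition :: "nat \<Rightarrow> edge set \<Rightarrow> nat set set" where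
  "comp_partition n H = component n H ` {1..n}"

definition is_bond :: "nat \<Rightarrow> edge set \<Rightarrow> edge set \<Rightarrow> bool" where
  "is_bond n G H \<longleftrightarrow> H \<subseteq> G \<and>
     (\<forall>C \<in> comp_partition n H. \<forall>(i,j)\<in>G. i \<in> C \<and> j \<in> C \<longrightarrow> (i,j) \<in> H)"

definition crossing_partition :: "nat set set \<Rightarrow> bool" where
  "crossing_partition P \<longleftrightarrow> (\<exists>B\<in>P. \<exists>B'\<in>P. B \<noteq> B' \<and>
     (\<exists>a\<in>B. \<exists>c\<in>B. \<exists>b\<in>B'. \<exists>d\<in>B'. a < b \<and> b < c \<and> c < d))"

definition bonds :: "nat \<Rightarrow> edge set \<Rightarrow> edge set set" where
  "bonds n G = {H. is_bond n G H}"

definition nc_bonds :: "nat \<Rightarrow> edge set \<Rightarrow> edge set set" where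
  "nc_bonds n G = {H. is_bond n G H \<and> \<not> crossing_partition (comp_partition n H)}"

definition edges_cross :: "edge \<Rightarrow> edge \<Rightarrow> bool" where
  "edges_cross e f \<longleftrightarrow> (case e of (a1,a2) \<Rightarrow> case f of (b1,b2) \<Rightarrow>
      (a1 < b1 \<and> b1 < a2 \<and> a2 < b2) \<or> (b1 < a1 \<and> a1 < b2 \<and> b2 < a2))"

text \<open>Induced subgraphs are identified with their vertex sets W \<subseteq> [n].\<close>
definition induced_edges :: "edge set \<Rightarrow> nat set \<Rightarrow> edge set" where
  "induced_edges G W = {(i,j) \<in> G. i \<in> W \<and> j \<in> W}"

definition induced_connected :: "nat \<Rightarrow> edge set \<Rightarrow> nat set \<Rightarrow> bool" where
  "induced_connected n G W \<longleftrightarrow> W \<noteq> {} \<and> W \<subseteq> {1..n} \<and>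
     (\<forall>u\<in>W. \<forall>v\<in>W. (adj (induced_edges G W))\<^sup>*\<^sup>* u v)"

definition contains_edges :: "nat set \<Rightarrow> edge \<Rightarrow> edge \<Rightarrow> bool" where
  "contains_edges W e f \<longleftrightarrow> fst e \<in> W \<and> snd e \<in> W \<and> fst f \<in> W \<and> snd f \<in> W"

definition minimal_conn_containing :: "nat \<Rightarrow> edge set \<Rightarrow> edge \<Rightarrow> edge \<Rightarrow> nat set \<Rightarrow> bool" where
  "minimal_conn_containing n G e f W \<longleftrightarrow>
     induced_connected n G W \<and> contains_edges W e f \<and>
     \<not> (\<exists>W'. W' \<subset> W \<and> induced_connected n G W' \<and> contains_edges W' e f)"

definition crossing_closed_pair :: "nat \<Rightarrow> edge set \<Rightarrow> edge \<Rightarrow> edge \<Rightarrow> bool" where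
  "crossing_closed_pair n G e f \<longleftrightarrow> (\<exists>!W. minimal_conn_containing n G e f W)"

definition crossing_closed :: "nat \<Rightarrow> edge set \<Rightarrow> bool" where
  "crossing_closed n G \<longleftrightarrow>
     (\<forall>e\<in>G. \<forall>f\<in>G. edges_cross e f \<longrightarrow> crossing_closed_pair n G e f)"

definition cycle_edges :: "edge set \<Rightarrow> edge set \<Rightarrow> bool" where
  "cycle_edges G C \<longleftrightarrow> (\<exists>vs. length vs \<ge> 3 \<and> distinct vs \<and>
     C = {mk_edge (vs ! i) (vs ! ((i + 1) mod length vs)) | i. i < length vs} \<and> C \<subseteq> G)"

text \<open>ord is a total order (reflexive relation) on E(G); (e,f) \<in> ord means e \<unlhd> f.\<close>
definition broken_circuit :: "edge set \<Rightarrow> edge rel \<Rightarrow> edge set \<Rightarrow> bool" where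
  "broken_circuit G ord B \<longleftrightarrow> (\<exists>C e. cycle_edges G C \<and> e \<in> C \<and>
     (\<forall>f\<in>C. (e, f) \<in> ord) \<and> B = C - {e})"

definition nbc_set :: "edge set \<Rightarrow> edge rel \<Rightarrow> edge set \<Rightarrow> bool" where
  "nbc_set G ord S \<longleftrightarrow> S \<subseteq> G \<and> \<not> (\<exists>B. broken_circuit G ord B \<and> B \<subseteq> S)"

definition nc_nbc_set :: "edge set \<Rightarrow> edge rel \<Rightarrow> edge set \<Rightarrow> bool" where
  "nc_nbc_set G ord S \<longleftrightarrow> nbc_set G ord S \<and> (\<forall>e\<in>S. \<forall>f\<in>S. \<not> edges_cross e f)"

definition is_join_in :: "edge set set \<Rightarrow> edge set set \<Rightarrow> edge set \<Rightarrow> bool" where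
  "is_join_in P X J \<longleftrightarrow> J \<in> P \<and> (\<forall>x\<in>X. x \<subseteq> J) \<and>
     (\<forall>K\<in>P. (\<forall>x\<in>X. x \<subseteq> K) \<longrightarrow> J \<subseteq> K)"

end

theory Submission
  imports Defs
begin

text \<open>The join of the single-edge bonds of S in L_G is the bond generated by S: the edges of G
  inside the connected components of S. Its partition is the partition into components of S, and a
  walk in a noncrossing edge set cannot pass from the inside of an edge to its outside without
  visiting an endpoint, so that partition is noncrossing. Hence the join lies in NC_G and is the
  join there as well.\<close>

lemma symp_adj: "symp (adj H)"
  by (auto simp: symp_def adj_def)

lemma adj_rtranclp_sym: "(adj H)\<^sup>*\<^sup>* x y \<Longrightarrow> (adj H)\<^sup>*\<^sup>* y x"
  by (rule sympD[OF symp_rtranclp[OF symp_adj]])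

lemma adj_rtranclp_mono: "A \<subseteq> B \<Longrightarrow> (adj A)\<^sup>*\<^sup>* x y \<Longrightarrow> (adj B)\<^sup>*\<^sup>* x y"
  by (rule mono_rtranclp[rule_format, of "adj A" "adj B"]) (auto simp: adj_def)

lemma adj_rtranclp_absorb:
  assumes "\<forall>(i,j)\<in>J. (adj S)\<^sup>*\<^sup>* i j"
  shows "(adj J)\<^sup>*\<^sup>* x y \<Longrightarrow> (adj S)\<^sup>*\<^sup>* x y"
proof -
  have "adj J \<le> (adj S)\<^sup>*\<^sup>*"
    using assms adj_rtranclp_sym[of S] unfolding adj_def by blast
  then have "(adj J)\<^sup>*\<^sup>* \<le> (adj S)\<^sup>*\<^sup>*"
    by (metis rtranclp_idemp rtranclp_mono)
  then show "(adj J)\<^sup>*\<^sup>* x y \<Longrightarrow> (adj S)\<^sup>*\<^sup>* x y" by blast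
qed

lemma walk_past_vertex_uses_straddling_edge:
  assumes ordered: "\<forall>(i,j)\<in>S. i < j"
  shows "(adj S)\<^sup>*\<^sup>* x y \<Longrightarrow> x < b \<Longrightarrow> b < y \<Longrightarrow> \<not> (adj S)\<^sup>*\<^sup>* x b \<Longrightarrow>
    \<exists>p q. (p,q) \<in> S \<and> p < b \<and> b < q \<and> (adj S)\<^sup>*\<^sup>* x p \<and> (adj S)\<^sup>*\<^sup>* x q"
proof (induction rule: rtranclp_induct)
  case base then show ?case by simp
next
  case (step y z)
  show ?case
  proof (cases "y < b")
    case True
    with step.prems have "(y,z) \<in> S"
      using step.hyps(2) ordered by (auto simp: adj_def)
    moreover have "(adj S)\<^sup>*\<^sup>* x z"
      using step.hyps by (rule rtranclp.rtrancl_into_rtrancl)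
    ultimately show ?thesis
      using True step by blast
  next
    case False
    with step have "b < y" by (metis linorder_neqE_nat)
    then show ?thesis using step by blast
  qed
qed

lemma walk_inside_edge_stays_inside:
  assumes ordered: "\<forall>(i,j)\<in>S. i < j"
    and noncrossing: "\<forall>e\<in>S. \<forall>f\<in>S. \<not> edges_cross e f"
    and uv: "(u,v) \<in> S"
  shows "(adj S)\<^sup>*\<^sup>* x y \<Longrightarrow> u < x \<Longrightarrow> x < v \<Longrightarrow>
    (u < y \<and> y < v) \<or> (adj S)\<^sup>*\<^sup>* x u \<or> (adj S)\<^sup>*\<^sup>* x v"
proof (induction rule: rtranclp_induct)
  case base then show ?case by simp
next
  case (step y z)
  have xz: "(adj S)\<^sup>*\<^sup>* x z"
    using step.hyps by (rule rtranclp.rtrancl_into_rtrancl)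
  from step.IH[OF step.prems] consider
      "u < y" "y < v" | "(adj S)\<^sup>*\<^sup>* x u" | "(adj S)\<^sup>*\<^sup>* x v"
    by blast
  then show ?case
  proof cases
    case 1
    have "edges_cross (u,v) (mk_edge y z)" if "z < u \<or> v < z"
      using 1 that by (auto simp: edges_cross_def mk_edge_def)
    moreover have "mk_edge y z \<in> S"
      using step.hyps(2) ordered by (auto simp: adj_def mk_edge_def min_def max_def)
    ultimately have "\<not> (z < u \<or> v < z)"
      using noncrossing uv by blast
    then show ?thesis
      using xz by (cases "z = u \<or> z = v") auto
  qed auto
qed

lemma noncrossing_edges_interleaved_connected:
  assumes ordered: "\<forall>(i,j)\<in>S. i < j"
    and noncrossing: "\<forall>e\<in>S. \<forall>f\<in>S. \<not> edges_cross e f"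
    and ac: "(adj S)\<^sup>*\<^sup>* a c" and bd: "(adj S)\<^sup>*\<^sup>* b d"
    and order: "a < b" "b < c" "c < d"
  shows "(adj S)\<^sup>*\<^sup>* a b"
proof (rule ccontr)
  \<comment> \<open>The edge uv straddling b traps the walk from b, so the edge pq straddling c lies inside uv;
    the walk from c back to u must then leave pq through an endpoint, joining b and c.\<close>
  let ?R = "(adj S)\<^sup>*\<^sup>*"
  note trans = rtranclp_trans[of "adj S"] and sym = adj_rtranclp_sym[of S]
  note straddle = walk_past_vertex_uses_straddling_edge[OF ordered]
  note stay = walk_inside_edge_stays_inside[OF ordered noncrossing]
  assume nab: "\<not> ?R a b"
  obtain u v where uv: "(u,v) \<in> S" "u < b" "b < v" "?R a u" "?R a v"
    using straddle[OF ac order(1,2) nab] by blast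
  have nbu: "\<not> ?R b u" "\<not> ?R b v"
    using uv nab trans sym by blast+
  have nbc: "\<not> ?R b c"
    using ac nab trans sym by blast
  obtain p q where pq: "(p,q) \<in> S" "p < c" "c < q" "?R b p" "?R b q"
    using straddle[OF bd order(2,3) nbc] by blast
  have "u < p"
    using stay[OF uv(1) pq(4) uv(2,3)] nbu by auto
  have "?R c u"
    using ac uv(4) trans sym by blast
  with \<open>u < p\<close> have "?R c p \<or> ?R c q"
    using stay[OF pq(1) _ pq(2,3)] by fastforce
  then show False
    using pq nbc trans sym by blast
qed

lemma component_eq_if_connected:
  assumes "(adj H)\<^sup>*\<^sup>* v w"
  shows "component n H v = component n H w"
proof -
  have "(adj H)\<^sup>*\<^sup>* v u \<longleftrightarrow> (adj H)\<^sup>*\<^sup>* w u" for u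
    using assms by (meson adj_rtranclp_sym rtranclp_trans)
  then show ?thesis
    by (simp add: component_def)
qed

lemma noncrossing_edges_noncrossing_components:
  assumes ordered: "\<forall>(i,j)\<in>S. i < j"
    and noncrossing: "\<forall>e\<in>S. \<forall>f\<in>S. \<not> edges_cross e f"
  shows "\<not> crossing_partition (comp_partition n S)"
proof
  let ?R = "(adj S)\<^sup>*\<^sup>*"
  assume "crossing_partition (comp_partition n S)"
  then obtain v w a b c d where blocks: "component n S v \<noteq> component n S w"
    and abcd: "a \<in> component n S v" "c \<in> component n S v"
      "b \<in> component n S w" "d \<in> component n S w" "a < b" "b < c" "c < d"
    unfolding crossing_partition_def comp_partition_def by blast
  have va: "?R v a" "?R v c" "?R w b" "?R w d"
    using abcd by (auto simp: component_def)
  then have "?R a c" "?R b d"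
    by (meson adj_rtranclp_sym rtranclp_trans)+
  then have "?R a b"
    using noncrossing_edges_interleaved_connected[OF ordered noncrossing _ _ abcd(5-7)] by blast
  then have "?R v w"
    using va by (meson adj_rtranclp_sym rtranclp_trans)
  then have "component n S v = component n S w"
    by (rule component_eq_if_connected)
  with blocks show False by contradiction
qed

definition generated_bond :: "edge set \<Rightarrow> edge set \<Rightarrow> edge set" where
  "generated_bond G S = {(i,j) \<in> G. (adj S)\<^sup>*\<^sup>* i j}"

lemma subset_generated_bond: "S \<subseteq> G \<Longrightarrow> S \<subseteq> generated_bond G S"
  by (auto simp: generated_bond_def adj_def)

lemma adj_rtranclp_generated_bond:
  assumes "S \<subseteq> G"
  shows "(adj (generated_bond G S))\<^sup>*\<^sup>* x y \<longleftrightarrow> (adj S)\<^sup>*\<^sup>* x y"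
proof -
  have "S \<subseteq> generated_bond G S"
    using assms by (rule subset_generated_bond)
  moreover have "\<forall>(i,j)\<in>generated_bond G S. (adj S)\<^sup>*\<^sup>* i j"
    by (auto simp: generated_bond_def)
  ultimately show ?thesis
    using adj_rtranclp_mono adj_rtranclp_absorb by metis
qed

lemma comp_partition_generated_bond:
  assumes "S \<subseteq> G"
  shows "comp_partition n (generated_bond G S) = comp_partition n S"
  unfolding comp_partition_def component_def adj_rtranclp_generated_bond[OF assms] ..

lemma generated_bond_is_bond:
  assumes "S \<subseteq> G"
  shows "is_bond n G (generated_bond G S)"
proof -
  have closed: "(i,j) \<in> generated_bond G S"
    if "(i,j) \<in> G" "i \<in> component n S v" "j \<in> component n S v" for i j v
  proof -
    have "(adj S)\<^sup>*\<^sup>* v i" "(adj S)\<^sup>*\<^sup>* v j"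
      using that by (auto simp: component_def)
    then have "(adj S)\<^sup>*\<^sup>* i j"
      by (meson adj_rtranclp_sym rtranclp_trans)
    with that(1) show ?thesis
      by (simp add: generated_bond_def)
  qed
  have "generated_bond G S \<subseteq> G"
    by (auto simp: generated_bond_def)
  with closed show ?thesis
    unfolding is_bond_def comp_partition_generated_bond[OF assms]
    unfolding comp_partition_def by blast
qed

lemma generated_bond_least:
  assumes "graph_on n G" and K: "is_bond n G K" and "S \<subseteq> K"
  shows "generated_bond G S \<subseteq> K"
proof clarify
  fix i j assume ij: "(i,j) \<in> generated_bond G S"
  then have "(i,j) \<in> G" "i \<in> {1..n}" "j \<in> {1..n}"
    using assms(1) by (auto simp: generated_bond_def graph_on_def)
  moreover have "(adj K)\<^sup>*\<^sup>* i j"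
    using ij adj_rtranclp_mono[OF \<open>S \<subseteq> K\<close>] by (auto simp: generated_bond_def)
  ultimately have "i \<in> component n K i" "j \<in> component n K i" "component n K i \<in> comp_partition n K"
    by (auto simp: component_def comp_partition_def)
  with K \<open>(i,j) \<in> G\<close> show "(i,j) \<in> K"
    unfolding is_bond_def by blast
qed

lemma is_join_in_singletons:
  "is_join_in P ((\<lambda>e. {e}) ` S) J \<longleftrightarrow> J \<in> P \<and> S \<subseteq> J \<and> (\<forall>K\<in>P. S \<subseteq> K \<longrightarrow> J \<subseteq> K)"
  unfolding is_join_in_def by blast

lemma is_join_in_subset: "is_join_in P X J \<Longrightarrow> Q \<subseteq> P \<Longrightarrow> J \<in> Q \<Longrightarrow> is_join_in Q X J"
  unfolding is_join_in_def by blast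

theorem lemma3p8:
  fixes n :: nat and G :: "edge set" and ord :: "edge rel" and S :: "edge set"
  assumes "graph_on n G"
    and "crossing_closed n G"
    and "linear_order_on G ord"
    and "nc_nbc_set G ord S"
  shows "\<exists>J. is_join_in (bonds n G) ((\<lambda>e. {e}) ` S) J \<and>
             is_join_in (nc_bonds n G) ((\<lambda>e. {e}) ` S) J"
proof -
  have SG: "S \<subseteq> G" and noncrossing: "\<forall>e\<in>S. \<forall>f\<in>S. \<not> edges_cross e f"
    using assms(4) by (auto simp: nc_nbc_set_def nbc_set_def)
  have ordered: "\<forall>(i,j)\<in>S. i < j"
    using SG assms(1) by (auto simp: graph_on_def)
  let ?J = "generated_bond G S"
  have join: "is_join_in (bonds n G) ((\<lambda>e. {e}) ` S) ?J"
    unfolding is_join_in_singletons bonds_def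
    using generated_bond_is_bond[OF SG] subset_generated_bond[OF SG] generated_bond_least[OF assms(1)]
    by blast
  have "?J \<in> nc_bonds n G"
    using generated_bond_is_bond[OF SG] noncrossing_edges_noncrossing_components[OF ordered noncrossing]
    by (simp add: nc_bonds_def comp_partition_generated_bond[OF SG])
  moreover have "nc_bonds n G \<subseteq> bonds n G"
    by (auto simp: bonds_def nc_bonds_def)
  ultimately have "is_join_in (nc_bonds n G) ((\<lambda>e. {e}) ` S) ?J"
    using is_join_in_subset[OF join] by blast
  with join show ?thesis by blast
qed

end
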